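(* Let $G\in\mathcal C^\infty(\bar\Omega,\mathbb R^{3\times3}_{\mathrm{sym,pos}})$, $\bar{\mathcal G}=G(\cdot,0)$, and let $y_0\in\mathcal C^\infty(\bar\omega,\mathbb R^3)$ satisfy $(\nabla y_0)^{\mathsf T}\nabla y_0=\bar{\mathcal G}_{2\times2}$ and $((\nabla y_0)^{\mathsf T}\nabla\vec b_0)_{\mathrm{sym}}=\frac12\partial_3G(x',0)_{2\times2}$. Define $II(x)=\frac{x_3^2}2\nabla\vec b_0^{\mathsf T}\nabla\vec b_0+\nabla y_0^{\mathsf T}\nabla_{\mathrm{tan}}\vec d_0-\frac14 x_3^2\partial_{33}G(x',0)_{2\times2}$ with $\vec d_0=\frac{x_3^2}2\tilde d_0(x')$. Then $II=\frac{x_3^2}2\overline{II}(x')$, and for all $x'\in\omega$: $$\overline{II}_{\mathrm{sym}}=\nabla\vec b_0^{\mathsf T}\nabla\vec b_0+\big(\nabla y_0^{\mathsf T}\nabla\tilde d_0\big)_{\mathrm{sym}}-\frac12\partial_{33}G(x',0)_{2\times2}=\begin{bmatrix}R_{1313}&R_{1323}\\R_{1323}&R_{2323}\end{bmatrix}(x',0),$$ where $R_{ijkl}$ are the Riemann curvatures of $G$.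
   Context: $\omega\subset\mathbb R^2$ open, bounded, connected, Lipschitz; $\Omega=\omega\times(-1/2,1/2)$. $\vec b_0=(\nabla y_0)(\bar{\mathcal G}_{2\times2})^{-1}(\bar{\mathcal G}_{13},\bar{\mathcal G}_{23})^{\mathsf T}+\sqrt{\det\bar{\mathcal G}/\det\bar{\mathcal G}_{2\times2}}\,\frac{\partial_1y_0\times\partial_2y_0}{|\cdot|}$; $Q_0=[\partial_1y_0,\partial_2y_0,\vec b_0]$; $\tilde d_0=Q_0^{-\mathsf T}\big(\partial_3G(x',0)e_3-\frac12\partial_3G(x',0)_{33}e_3-[(\nabla\vec b_0)^{\mathsf T}\vec b_0;0]\big)$; $\nabla_{\mathrm{tan}}\vec d_0=[\partial_1\vec d_0,\partial_2\vec d_0]$. $\Gamma^i_{kl}=\frac12G^{im}(\partial_lG_{mk}+\partial_kG_{ml}-\partial_mG_{kl})$; $R_{iklm}=\frac12(\partial_{kl}G_{im}+\partial_{im}G_{kl}-\partial_{km}G_{il}-\partial_{il}G_{km})+G_{np}(\Gamma^n_{kl}\Gamma^p_{im}-\Gamma^n_{km}\Gamma^p_{il})$. *)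

theory Defs
  imports "HOL-Analysis.Analysis"
begin

definition partial :: "'n::finite \<Rightarrow> (real^'n \<Rightarrow> 'b::real_normed_vector) \<Rightarrow> real^'n \<Rightarrow> 'b" where
  "partial i f x = vector_derivative (\<lambda>t. f (x + t *\<^sub>R axis i 1)) (at 0)"

fun iter_partial :: "'n::finite list \<Rightarrow> (real^'n \<Rightarrow> 'b::real_normed_vector) \<Rightarrow> real^'n \<Rightarrow> 'b" where
  "iter_partial [] f = f"
| "iter_partial (i # is) f = partial i (iter_partial is f)"

definition smooth_on :: "(real^'n::finite) set \<Rightarrow> (real^'n \<Rightarrow> 'b::real_normed_vector) \<Rightarrow> bool" where
  "smooth_on U f \<longleftrightarrow>
     (\<forall>is. continuous_on U (iter_partial is f) \<and>
        (\<forall>i. \<forall>x\<in>U. ((\<lambda>t. iter_partial is f (x + t *\<^sub>R axis i 1))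
                        has_vector_derivative iter_partial (i # is) f x) (at 0)))"

definition smooth_on_closure :: "(real^'n::finite) set \<Rightarrow> (real^'n \<Rightarrow> 'b::real_normed_vector) \<Rightarrow> bool" where
  "smooth_on_closure S f \<longleftrightarrow> (\<exists>U. open U \<and> closure S \<subseteq> U \<and> smooth_on U f)"

definition lipschitz_boundary2 :: "(real^2) set \<Rightarrow> bool" where
  "lipschitz_boundary2 \<omega> \<longleftrightarrow>
     (\<forall>p\<in>frontier \<omega>. \<exists>r>0. \<exists>Q::real^2^2. orthogonal_matrix Q \<and>
        (\<exists>C f. C-lipschitz_on UNIV (f::real\<Rightarrow>real) \<and>
           \<omega> \<inter> ball p r = {x \<in> ball p r. (transpose Q *v (x - p))$2 < f ((transpose Q *v (x - p))$1)}))"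

definition emb :: "real^2 \<Rightarrow> real^3" where
  "emb x' = vector [x'$1, x'$2, 0]"

definition proj :: "real^3 \<Rightarrow> real^2" where
  "proj x = vector [x$1, x$2]"

definition cyl :: "(real^2) set \<Rightarrow> (real^3) set" where
  "cyl \<omega> = {x. proj x \<in> \<omega> \<and> -1/2 < x$3 \<and> x$3 < 1/2}"

definition idx :: "2 \<Rightarrow> 3" where
  "idx a = (if a = 1 then 1 else 2)"

definition blk2 :: "real^3^3 \<Rightarrow> real^2^2" where
  "blk2 M = (\<chi> a b. M $ idx a $ idx b)"

definition msym :: "real^'n^'n \<Rightarrow> real^'n^'n" where
  "msym M = (1/2) *\<^sub>R (M + transpose M)"

definition sym_pos_def :: "real^3^3 \<Rightarrow> bool" where
  "sym_pos_def M \<longleftrightarrow> transpose M = M \<and> (\<forall>v. v \<noteq> 0 \<longrightarrow> v \<bullet> (M *v v) > 0)"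

definition grad2 :: "(real^2 \<Rightarrow> real^3) \<Rightarrow> real^2 \<Rightarrow> real^2^3" where
  "grad2 f x' = (\<chi> r c. partial c f x' $ r)"

definition grad_tan :: "(real^3 \<Rightarrow> real^3) \<Rightarrow> real^3 \<Rightarrow> real^2^3" where
  "grad_tan f x = (\<chi> r c. partial (idx c) f x $ r)"

definition Gbar :: "(real^3 \<Rightarrow> real^3^3) \<Rightarrow> real^2 \<Rightarrow> real^3^3" where
  "Gbar G x' = G (emb x')"

definition b0 :: "(real^3 \<Rightarrow> real^3^3) \<Rightarrow> (real^2 \<Rightarrow> real^3) \<Rightarrow> real^2 \<Rightarrow> real^3" where
  "b0 G y0 x' =
     grad2 y0 x' *v (matrix_inv (blk2 (Gbar G x')) *v vector [Gbar G x' $ 1 $ 3, Gbar G x' $ 2 $ 3])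
     + sqrt (det (Gbar G x') / det (blk2 (Gbar G x')))
       *\<^sub>R ((cross3 (partial 1 y0 x') (partial 2 y0 x')) /\<^sub>R norm (cross3 (partial 1 y0 x') (partial 2 y0 x')))"

definition Q0 :: "(real^3 \<Rightarrow> real^3^3) \<Rightarrow> (real^2 \<Rightarrow> real^3) \<Rightarrow> real^2 \<Rightarrow> real^3^3" where
  "Q0 G y0 x' = (\<chi> r c. if c = 1 then partial 1 y0 x' $ r
                         else if c = 2 then partial 2 y0 x' $ r
                         else b0 G y0 x' $ r)"

definition dtil0 :: "(real^3 \<Rightarrow> real^3^3) \<Rightarrow> (real^2 \<Rightarrow> real^3) \<Rightarrow> real^2 \<Rightarrow> real^3" where
  "dtil0 G y0 x' =
     (let w = transpose (grad2 (b0 G y0) x') *v b0 G y0 x';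
          dG = partial 3 G (emb x')
      in matrix_inv (transpose (Q0 G y0 x')) *v
           (dG *v axis 3 1 - (1/2 * dG $ 3 $ 3) *\<^sub>R axis 3 1 - vector [w $ 1, w $ 2, 0]))"

definition d0 :: "(real^3 \<Rightarrow> real^3^3) \<Rightarrow> (real^2 \<Rightarrow> real^3) \<Rightarrow> real^3 \<Rightarrow> real^3" where
  "d0 G y0 x = (x $ 3 ^ 2 / 2) *\<^sub>R dtil0 G y0 (proj x)"

definition II :: "(real^3 \<Rightarrow> real^3^3) \<Rightarrow> (real^2 \<Rightarrow> real^3) \<Rightarrow> real^3 \<Rightarrow> real^2^2" where
  "II G y0 x =
     (x $ 3 ^ 2 / 2) *\<^sub>R (transpose (grad2 (b0 G y0) (proj x)) ** grad2 (b0 G y0) (proj x))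
     + transpose (grad2 y0 (proj x)) ** grad_tan (d0 G y0) x
     - (1/4 * x $ 3 ^ 2) *\<^sub>R blk2 (partial 3 (partial 3 G) (emb (proj x)))"

definition IIbar :: "(real^3 \<Rightarrow> real^3^3) \<Rightarrow> (real^2 \<Rightarrow> real^3) \<Rightarrow> real^2 \<Rightarrow> real^2^2" where
  "IIbar G y0 x' =
     transpose (grad2 (b0 G y0) x') ** grad2 (b0 G y0) x'
     + transpose (grad2 y0 x') ** grad2 (dtil0 G y0) x'
     - (1/2) *\<^sub>R blk2 (partial 3 (partial 3 G) (emb x'))"

definition Christoffel :: "(real^3 \<Rightarrow> real^3^3) \<Rightarrow> 3 \<Rightarrow> 3 \<Rightarrow> 3 \<Rightarrow> real^3 \<Rightarrow> real" where
  "Christoffel G i k l x =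
     (1/2) * (\<Sum>m\<in>UNIV. matrix_inv (G x) $ i $ m *
        (partial l G x $ m $ k + partial k G x $ m $ l - partial m G x $ k $ l))"

definition Riem :: "(real^3 \<Rightarrow> real^3^3) \<Rightarrow> 3 \<Rightarrow> 3 \<Rightarrow> 3 \<Rightarrow> 3 \<Rightarrow> real^3 \<Rightarrow> real" where
  "Riem G i k l m x =
     (1/2) * (partial k (partial l G) x $ i $ m + partial i (partial m G) x $ k $ l
              - partial k (partial m G) x $ i $ l - partial i (partial l G) x $ k $ m)
     + (\<Sum>n\<in>UNIV. \<Sum>p\<in>UNIV. G x $ n $ p *
          (Christoffel G n k l x * Christoffel G p i m x - Christoffel G n k m x * Christoffel G p i l x))"

definition Rmat :: "(real^3 \<Rightarrow> real^3^3) \<Rightarrow> real^3 \<Rightarrow> real^2^2" where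
  "Rmat G x = (\<chi> a b. if a = 1 \<and> b = 1 then Riem G 1 3 1 3 x
                       else if a = 2 \<and> b = 2 then Riem G 2 3 2 3 x
                       else Riem G 1 3 2 3 x)"

end

theory Submission
  imports Defs
begin

text \<open>The construction of \<open>b0\<close> makes \<open>Q0\<^sup>T Q0 = G(x', 0)\<close>, and the
  compatibility hypothesis together with the definition of \<open>dtil0\<close> say that all first derivatives of \<open>G\<close>
  at \<open>x\<^sub>3 = 0\<close> are those of \<open>\<nabla>u\<^sup>T \<nabla>u\<close> for \<open>u = y0 + x\<^sub>3 b0 + (x\<^sub>3\<^sup>2/2) dtil0\<close>, with \<open>\<nabla>u = Q0\<close> at \<open>x\<^sub>3 = 0\<close>.
  Hence the Christoffel symbols of \<open>G\<close> on the mid-plate are the coordinates of the second derivatives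
  of \<open>u\<close> in the frame \<open>Q0\<close>, and the quadratic part of \<open>R\<^sub>a\<^sub>3\<^sub>b\<^sub>3\<close> is \<open>\<partial>\<^sub>b b0 \<bullet> \<partial>\<^sub>a b0 - dtil0 \<bullet> \<partial>\<^sub>a\<^sub>b y0\<close>.
  Differentiating the first-order identities tangentially expresses the second derivatives of \<open>G\<close> in
  \<open>R\<^sub>a\<^sub>3\<^sub>b\<^sub>3\<close> through \<open>y0\<close>, \<open>b0\<close> and \<open>dtil0\<close>, and the two sides agree. All identities are pointwise.\<close>

definition has_partial :: "(real^'n::finite \<Rightarrow> 'b::real_normed_vector) \<Rightarrow> real^'n \<Rightarrow> 'n \<Rightarrow> 'b \<Rightarrow> bool" where
  "has_partial f z i v \<longleftrightarrow> ((\<lambda>t. f (z + t *\<^sub>R axis i 1)) has_vector_derivative v) (at 0)"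

lemma partial_eqI: "has_partial f z i v \<Longrightarrow> partial i f z = v"
  unfolding has_partial_def partial_def by (rule vector_derivative_at)

lemma smooth_on_has_partial:
  assumes "smooth_on U f" "x \<in> U"
  shows "has_partial (iter_partial is f) x i (iter_partial (i # is) f x)"
  using assms unfolding smooth_on_def has_partial_def by blast

lemma smooth_on_has_partial1:
  "smooth_on U f \<Longrightarrow> x \<in> U \<Longrightarrow> has_partial f x i (partial i f x)"
  using smooth_on_has_partial[of U f x "[]" i] by simp

lemma smooth_on_has_partial2:
  "smooth_on U f \<Longrightarrow> x \<in> U \<Longrightarrow> has_partial (partial j f) x i (partial i (partial j f) x)"
  using smooth_on_has_partial[of U f x "[j]" i] by simp

lemma smooth_on_continuous_on: "smooth_on U f \<Longrightarrow> continuous_on U (iter_partial is f)"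
  unfolding smooth_on_def by blast

lemma has_partial_unique_on_open:
  assumes W: "open W" "z \<in> W" and eq: "\<forall>y\<in>W. f y = g y"
    and f: "has_partial f z i v" and g: "has_partial g z i w"
  shows "v = w"
proof -
  have "open {t::real. z + t *\<^sub>R axis i 1 \<in> W}"
    using continuous_open_vimage[OF W(1), of "\<lambda>t. z + t *\<^sub>R axis i 1"] by (simp add: vimage_def)
  then have "((\<lambda>t. g (z + t *\<^sub>R axis i 1)) has_vector_derivative v) (at 0)"
    by (rule has_vector_derivative_transform_within_open[OF f[unfolded has_partial_def]]) (use W eq in auto)
  then show ?thesis
    using g vector_derivative_unique_at unfolding has_partial_def by blast
qed

lemma has_partial_bounded_linear:
  "bounded_linear L \<Longrightarrow> has_partial f z i v \<Longrightarrow> has_partial (\<lambda>y. L (f y)) z i (L v)"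
  unfolding has_partial_def by (rule bounded_linear.has_vector_derivative)

lemma has_partial_vec_nth: "has_partial f z i v \<Longrightarrow> has_partial (\<lambda>y. f y $ k) z i (v $ k)"
  by (rule has_partial_bounded_linear[OF bounded_linear_vec_nth])

lemma has_partial_mat_nth: "has_partial f z i v \<Longrightarrow> has_partial (\<lambda>y. f y $ k $ l) z i (v $ k $ l)"
  by (intro has_partial_vec_nth)

lemma has_partial_inner:
  assumes "has_partial f z i v" "has_partial g z i w"
  shows "has_partial (\<lambda>y. f y \<bullet> g y) z i (v \<bullet> g z + f z \<bullet> w)"
  using bounded_bilinear.has_vector_derivative[OF bounded_bilinear_inner assms[unfolded has_partial_def]]
  unfolding has_partial_def by (simp add: algebra_simps)

lemma has_partial_add:
  "has_partial f z i v \<Longrightarrow> has_partial g z i w \<Longrightarrow> has_partial (\<lambda>y. f y + g y) z i (v + w)"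
  unfolding has_partial_def by (rule has_vector_derivative_add)

lemma has_partial_diff:
  "has_partial f z i v \<Longrightarrow> has_partial g z i w \<Longrightarrow> has_partial (\<lambda>y. f y - g y) z i (v - w)"
  unfolding has_partial_def by (rule has_vector_derivative_diff)

lemma has_partial_scaleR: "has_partial f z i v \<Longrightarrow> has_partial (\<lambda>y. c *\<^sub>R f y) z i (c *\<^sub>R v)"
  by (rule has_partial_bounded_linear[OF bounded_linear_scaleR_right])

lemma has_partial_shift: "has_partial f (z + w) i v \<Longrightarrow> has_partial (\<lambda>y. f (y + w)) z i v"
  unfolding has_partial_def by (simp add: algebra_simps)

lemma has_partial_symmetric:
  fixes f :: "real^'n::finite \<Rightarrow> real^'m::finite^'m"
  assumes "open W" "z \<in> W" and "\<forall>y\<in>W. transpose (f y) = f y" and "has_partial f z i v"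
  shows "transpose v = v"
proof -
  have "bounded_linear (transpose :: real^'m^'m \<Rightarrow> real^'m^'m)"
    unfolding linear_conv_bounded_linear[symmetric]
    by (rule linearI) (simp_all add: transpose_def vec_eq_iff)
  from has_partial_bounded_linear[OF this assms(4)] show ?thesis
    using has_partial_unique_on_open[OF assms(1,2)] assms(3,4) by metis
qed

lemma has_partial_differentiable:
  "has_partial f z i v \<Longrightarrow> (\<lambda>t. f (z + t *\<^sub>R axis i 1)) differentiable at 0"
  unfolding has_partial_def differentiable_def has_vector_derivative_def by blast

lemma differentiable_has_partial:
  "(\<lambda>t. f (z + t *\<^sub>R axis i 1)) differentiable at 0 \<Longrightarrow> has_partial f z i (partial i f z)"
  unfolding has_partial_def partial_def by (rule vector_derivative_works[THEN iffD1])

lemma differentiable_on_line_cong: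
  fixes f g :: "real^'n::finite \<Rightarrow> 'b::real_normed_vector"
  assumes "open W" "z \<in> W" "\<forall>y\<in>W. f y = g y"
    and "(\<lambda>t. g (z + t *\<^sub>R axis i 1)) differentiable at 0"
  shows "(\<lambda>t. f (z + t *\<^sub>R axis i 1)) differentiable at 0"
proof -
  obtain e where e: "e > 0" "ball z e \<subseteq> W" using assms(1,2) openE by blast
  show ?thesis
  proof (rule differentiable_transform_within[OF assms(4) e(1)])
    fix t :: real assume "dist t 0 < e"
    then have "z + t *\<^sub>R axis i 1 \<in> W" using e(2) by (auto simp: dist_norm)
    then show "g (z + t *\<^sub>R axis i 1) = f (z + t *\<^sub>R axis i 1)" using assms(3) by auto
  qed simp
qed

section \<open>Symmetry of second partial derivatives\<close>

lemma has_partial_mvt: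
  fixes f :: "real^'n::finite \<Rightarrow> real"
  assumes "0 < h" and "\<forall>s\<in>{0..h}. has_partial f (y + s *\<^sub>R axis i 1) i (g (y + s *\<^sub>R axis i 1))"
  shows "\<exists>s. 0 < s \<and> s < h \<and> f (y + h *\<^sub>R axis i 1) - f y = h * g (y + s *\<^sub>R axis i 1)"
proof -
  have "((\<lambda>s. f (y + s *\<^sub>R axis i 1)) has_real_derivative g (y + s *\<^sub>R axis i 1)) (at s)"
    if "0 \<le> s" "s \<le> h" for s
  proof -
    have "((\<lambda>t. f (y + s *\<^sub>R axis i 1 + t *\<^sub>R axis i 1)) has_real_derivative g (y + s *\<^sub>R axis i 1)) (at 0)"
      using assms(2) that unfolding has_partial_def has_real_derivative_iff_has_vector_derivative by auto
    then have "((\<lambda>t. f (y + (t + s) *\<^sub>R axis i 1)) has_real_derivative g (y + s *\<^sub>R axis i 1)) (at 0)"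
      by (simp add: algebra_simps)
    then show ?thesis using DERIV_shift[of "\<lambda>s. f (y + s *\<^sub>R axis i 1)" _ 0 s] by simp
  qed
  from MVT2[OF assms(1) this] obtain s where "0 < s" "s < h"
    "f (y + h *\<^sub>R axis i 1) - f (y + 0 *\<^sub>R axis i 1) = (h - 0) * g (y + s *\<^sub>R axis i 1)"
    by blast
  then show ?thesis by auto
qed

lemma dist_add_axes_le:
  fixes x :: "real^'n::finite" and s u :: real
  assumes "0 \<le> s" "0 \<le> u"
  shows "dist (x + s *\<^sub>R axis i 1 + u *\<^sub>R axis j 1) x \<le> s + u"
proof -
  have "dist (x + s *\<^sub>R axis i 1 + u *\<^sub>R axis j 1) x = norm (s *\<^sub>R axis i 1 + u *\<^sub>R axis j 1 :: real^'n)"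
    by (simp only: dist_norm add.assoc add_diff_cancel_left')
  also have "\<dots> \<le> s + u"
    using norm_triangle_ineq[of "s *\<^sub>R axis i 1" "u *\<^sub>R axis j 1 :: real^'n"] assms by simp
  finally show ?thesis .
qed

lemma second_difference_mvt:
  fixes f :: "real^'n::finite \<Rightarrow> real"
  assumes h: "0 < h" and U: "cball x (2 * h) \<subseteq> U"
    and fi: "\<forall>y\<in>U. has_partial f y i (fi y)" and fij: "\<forall>y\<in>U. has_partial fi y j (fij y)"
  shows "\<exists>p. dist p x < 2 * h \<and>
    f (x + h *\<^sub>R axis i 1 + h *\<^sub>R axis j 1) - f (x + h *\<^sub>R axis i 1) - f (x + h *\<^sub>R axis j 1) + f x
      = h * h * fij p"
proof -
  define ei where "ei = (axis i 1 :: real^'n)"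
  define ej where "ej = (axis j 1 :: real^'n)"
  have dist_le: "dist (x + s *\<^sub>R ei + u *\<^sub>R ej) x \<le> s + u" if "0 \<le> s" "0 \<le> u" for s u
    unfolding ei_def ej_def using that by (rule dist_add_axes_le)
  have inU: "x + s *\<^sub>R ei + u *\<^sub>R ej \<in> U" if "0 \<le> s" "s \<le> h" "0 \<le> u" "u \<le> h" for s u
  proof -
    have "x + s *\<^sub>R ei + u *\<^sub>R ej \<in> cball x (2 * h)"
      using dist_le[of s u] that by (simp add: dist_commute)
    then show ?thesis using U by blast
  qed
  have "\<exists>s. 0 < s \<and> s < h \<and>
      (\<lambda>p. f (p + h *\<^sub>R ej) - f p) (x + h *\<^sub>R ei) - (\<lambda>p. f (p + h *\<^sub>R ej) - f p) x
        = h * (\<lambda>p. fi (p + h *\<^sub>R ej) - fi p) (x + s *\<^sub>R ei)"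
    unfolding ei_def
  proof (rule has_partial_mvt[OF h], intro ballI has_partial_diff has_partial_shift)
    fix s assume "s \<in> {0..h}"
    then show "has_partial f (x + s *\<^sub>R axis i 1 + h *\<^sub>R ej) i (fi (x + s *\<^sub>R axis i 1 + h *\<^sub>R ej))"
      "has_partial f (x + s *\<^sub>R axis i 1) i (fi (x + s *\<^sub>R axis i 1))"
      using fi inU[of s h] inU[of s 0] h unfolding ei_def by auto
  qed
  then obtain s where s: "0 < s" "s < h"
    "f (x + h *\<^sub>R ei + h *\<^sub>R ej) - f (x + h *\<^sub>R ei) - (f (x + h *\<^sub>R ej) - f x)
       = h * (fi (x + s *\<^sub>R ei + h *\<^sub>R ej) - fi (x + s *\<^sub>R ei))"
    by blast
  have "\<exists>u. 0 < u \<and> u < h \<and>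
      fi (x + s *\<^sub>R ei + h *\<^sub>R ej) - fi (x + s *\<^sub>R ei) = h * fij (x + s *\<^sub>R ei + u *\<^sub>R ej)"
    unfolding ej_def by (rule has_partial_mvt[OF h]) (use fij inU[of s] s(1,2) in \<open>auto simp: ej_def\<close>)
  then obtain u where u: "0 < u" "u < h"
    "fi (x + s *\<^sub>R ei + h *\<^sub>R ej) - fi (x + s *\<^sub>R ei) = h * fij (x + s *\<^sub>R ei + u *\<^sub>R ej)"
    by blast
  have "dist (x + s *\<^sub>R ei + u *\<^sub>R ej) x < 2 * h"
    using dist_le[of s u] s(1,2) u(1,2) by simp
  moreover have "f (x + h *\<^sub>R ei + h *\<^sub>R ej) - f (x + h *\<^sub>R ei) - f (x + h *\<^sub>R ej) + f x
      = h * h * fij (x + s *\<^sub>R ei + u *\<^sub>R ej)"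
    using s(3)[unfolded u(3)] by (simp add: algebra_simps)
  ultimately show ?thesis
    unfolding ei_def ej_def by blast
qed

lemma second_partials_commute_real:
  fixes f :: "real^'n::finite \<Rightarrow> real"
  assumes U: "open U" "x \<in> U"
    and fi: "\<forall>y\<in>U. has_partial f y i (fi y)" and fj: "\<forall>y\<in>U. has_partial f y j (fj y)"
    and fij: "\<forall>y\<in>U. has_partial fi y j (fij y)" and fji: "\<forall>y\<in>U. has_partial fj y i (fji y)"
    and "continuous_on U fij" "continuous_on U fji"
  shows "fij x = fji x"
proof (rule ccontr)
  assume ne: "fij x \<noteq> fji x"
  define e where "e = \<bar>fij x - fji x\<bar> / 2"
  have e: "e > 0" using ne by (simp add: e_def)
  have "continuous (at x) fij" "continuous (at x) fji"
    using assms(7,8) U continuous_on_eq_continuous_at by blast+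
  then obtain d1 d2 where d: "d1 > 0" "\<forall>y. dist y x < d1 \<longrightarrow> dist (fij y) (fij x) < e"
      "d2 > 0" "\<forall>y. dist y x < d2 \<longrightarrow> dist (fji y) (fji x) < e"
    using e unfolding continuous_at_eps_delta by (metis dist_commute)
  obtain r where r: "r > 0" "ball x r \<subseteq> U" using U openE by blast
  define h where "h = min (min d1 d2) r / 4"
  have h: "0 < h" "2 * h < r" "2 * h < d1" "2 * h < d2"
    using d r by (simp_all add: h_def)
  have "cball x (2 * h) \<subseteq> U"
    using r(2) h(2) cball_subset_ball_iff[of x "2 * h" x r] by auto
  obtain p where p: "dist p x < 2 * h"
    "f (x + h *\<^sub>R axis i 1 + h *\<^sub>R axis j 1) - f (x + h *\<^sub>R axis i 1) - f (x + h *\<^sub>R axis j 1) + f x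
       = h * h * fij p"
    using second_difference_mvt[OF h(1) \<open>cball x (2 * h) \<subseteq> U\<close> fi fij] by blast
  obtain q where q: "dist q x < 2 * h"
    "f (x + h *\<^sub>R axis j 1 + h *\<^sub>R axis i 1) - f (x + h *\<^sub>R axis j 1) - f (x + h *\<^sub>R axis i 1) + f x
       = h * h * fji q"
    using second_difference_mvt[OF h(1) \<open>cball x (2 * h) \<subseteq> U\<close> fj fji] by blast
  have "h * h * fij p = h * h * fji q"
    unfolding p(2)[symmetric] q(2)[symmetric] by (simp add: algebra_simps)
  then have "fij p = fji q"
    using h(1) by simp
  moreover have "dist (fij p) (fij x) < e" "dist (fji q) (fji x) < e"
    using d(2)[rule_format, of p] d(4)[rule_format, of q] p(1) q(1) h(3,4) by linarith+
  ultimately have "\<bar>fij x - fji x\<bar> < 2 * e" by (simp add: dist_real_def)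
  then show False by (simp add: e_def)
qed

lemma has_partial_inner_left: "has_partial f z i v \<Longrightarrow> has_partial (\<lambda>y. f y \<bullet> b) z i (v \<bullet> b)"
  by (rule has_partial_bounded_linear[OF bounded_linear_inner_left])

lemma partial_commute:
  fixes f :: "real^'n::finite \<Rightarrow> 'b::euclidean_space"
  assumes f: "smooth_on U f" and U: "open U" "x \<in> U"
  shows "partial j (partial i f) x = partial i (partial j f) x"
proof (rule euclidean_eqI)
  fix b :: 'b
  have cont: "continuous_on U (\<lambda>y. partial k (partial l f) y \<bullet> b)" for k l
    using smooth_on_continuous_on[OF f, of "[k, l]"] by (simp add: continuous_on_inner)
  have d1: "\<forall>y\<in>U. has_partial (\<lambda>y. f y \<bullet> b) y k (partial k f y \<bullet> b)" for k
    using smooth_on_has_partial1[OF f] has_partial_inner_left by blast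
  have d2: "\<forall>y\<in>U. has_partial (\<lambda>y. partial k f y \<bullet> b) y l (partial l (partial k f) y \<bullet> b)" for k l
    using smooth_on_has_partial2[OF f] has_partial_inner_left by blast
  show "partial j (partial i f) x \<bullet> b = partial i (partial j f) x \<bullet> b"
    by (rule second_partials_commute_real[OF U d1 d1 d2 d2 cont cont])
qed

lemma differentiable_vec_nth:
  "f differentiable F \<Longrightarrow> (\<lambda>t. f t $ i) differentiable F"
  unfolding differentiable_def using bounded_linear.has_derivative[OF bounded_linear_vec_nth] by blast

lemma differentiable_vec_componentwise:
  fixes f :: "'a::real_normed_vector \<Rightarrow> real^'n::finite"
  assumes "\<And>i. (\<lambda>t. f t $ i) differentiable (at a within S)"
  shows "f differentiable (at a within S)"
proof -
  have "(\<lambda>t. f t \<bullet> b) differentiable (at a within S)" if b: "b \<in> Basis" for b :: "real^'n"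
  proof -
    obtain i where "b = axis i 1" using b by (auto simp: Basis_vec_def)
    then show ?thesis using assms[of i] by (simp add: cart_eq_inner_axis)
  qed
  then show ?thesis using differentiable_componentwise_within by blast
qed

lemma differentiable_det:
  fixes M :: "'a::real_normed_vector \<Rightarrow> real^'n::finite^'n"
  assumes "\<And>i j. (\<lambda>t. M t $ i $ j) differentiable (at x within S)"
  shows "(\<lambda>t. det (M t)) differentiable (at x within S)"
proof -
  have "(\<lambda>t. \<Prod>i\<in>I. M t $ i $ p i) differentiable (at x within S)" if "finite I" for I p
    using that by (induction rule: finite_induct) (simp_all add: assms)
  then show ?thesis
    unfolding det_def by (intro differentiable_sum ballI differentiable_mult) simp_all
qed

lemma differentiable_matrix_vector_mult_nth:
  fixes M :: "'a::real_normed_vector \<Rightarrow> real^'n::finite^'m::finite"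
  assumes "\<And>i j. (\<lambda>t. M t $ i $ j) differentiable (at x within S)"
    and "\<And>j. (\<lambda>t. v t $ j) differentiable (at x within S)"
  shows "(\<lambda>t. (M t *v v t) $ k) differentiable (at x within S)"
  unfolding matrix_vector_mult_def by (simp, intro differentiable_sum ballI differentiable_mult assms) simp

lemma differentiable_cross3_nth:
  assumes "\<And>i. (\<lambda>t. a t $ i) differentiable (at x within S)"
    and "\<And>i. (\<lambda>t. b t $ i) differentiable (at x within S)"
  shows "(\<lambda>t. cross3 (a t) (b t) $ k) differentiable (at x within S)"
  using exhaust_3[of k] by (auto simp: cross3_simps intro!: differentiable_diff differentiable_mult assms)

lemma differentiable_sqrt:
  fixes f :: "'a::real_normed_vector \<Rightarrow> real"
  assumes "f differentiable (at x)" "f x > 0"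
  shows "(\<lambda>t. sqrt (f t)) differentiable (at x)"
proof -
  have "sqrt differentiable (at (f x))"
    using DERIV_real_sqrt[OF assms(2)] by (metis differentiableI has_field_derivative_imp_has_derivative)
  then show ?thesis using assms(1) by (rule differentiable_compose)
qed

lemma differentiable_norm:
  fixes f :: "'a::real_normed_vector \<Rightarrow> 'b::euclidean_space"
  assumes "f differentiable (at x)" "f x \<noteq> 0"
  shows "(\<lambda>t. norm (f t)) differentiable (at x)"
  using differentiable_compose[OF differentiable_norm_at[OF assms(2)] assms(1)] .

lemma matrix_inv_mult:
  fixes A :: "real^'n::finite^'n"
  assumes "det A \<noteq> 0"
  shows "A ** matrix_inv A = mat 1" "matrix_inv A ** A = mat 1"
proof -
  have "\<exists>A'. A ** A' = mat 1 \<and> A' ** A = mat 1"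
    using assms invertible_det_nz unfolding invertible_def by blast
  then have "A ** matrix_inv A = mat 1 \<and> matrix_inv A ** A = mat 1"
    unfolding matrix_inv_def by (rule someI_ex)
  then show "A ** matrix_inv A = mat 1" "matrix_inv A ** A = mat 1" by auto
qed

lemma matrix_inv_mv:
  fixes A :: "real^'n::finite^'n"
  assumes "det A \<noteq> 0"
  shows "A *v (matrix_inv A *v v) = v"
  using matrix_inv_mult[OF assms] by (simp add: matrix_vector_mul_assoc)

lemma matrix_inv_mv_eqI:
  fixes A :: "real^'n::finite^'n"
  assumes "det A \<noteq> 0" "A *v u = v"
  shows "matrix_inv A *v v = u"
  using matrix_inv_mult[OF assms(1)] assms(2)
  by (metis matrix_vector_mul_assoc matrix_vector_mul_lid)

lemma matrix_inv_mv_cramer: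
  fixes A :: "real^'n::finite^'n"
  assumes "det A \<noteq> 0"
  shows "matrix_inv A *v v = (\<chi> k. det (\<chi> i j. if j = k then v $ i else A $ i $ j) / det A)"
  using cramer[OF assms, of "matrix_inv A *v v" v] matrix_inv_mv[OF assms] by simp

lemma differentiable_matrix_inv_mv_nth:
  fixes M :: "'a::real_normed_vector \<Rightarrow> real^'n::finite^'n"
  assumes M: "\<And>i j. (\<lambda>t. M t $ i $ j) differentiable (at x)" and "det (M x) \<noteq> 0"
    and v: "\<And>i. (\<lambda>t. v t $ i) differentiable (at x)"
  shows "(\<lambda>t. (matrix_inv (M t) *v v t) $ k) differentiable (at x)"
proof -
  have det: "(\<lambda>t. det (M t)) differentiable (at x)" by (rule differentiable_det[OF M])
  then have "isCont (\<lambda>t. det (M t)) x" by (rule differentiable_imp_continuous_within)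
  then obtain e where e: "e > 0" "\<forall>y. dist x y < e \<longrightarrow> det (M y) \<noteq> 0"
    using continuous_at_avoid assms(2) by blast
  have "(\<lambda>t. (\<chi> i j. if j = k then v t $ i else M t $ i $ j) $ i $ j) differentiable (at x)" for i j
    by (cases "j = k") (simp_all add: M v)
  then have "(\<lambda>t. det (\<chi> i j. if j = k then v t $ i else M t $ i $ j) / det (M t)) differentiable (at x)"
    using assms(2) by (intro differentiable_divide det differentiable_det)
  then show ?thesis
    by (rule differentiable_transform_within[OF _ e(1)]) (use e(2) in \<open>auto simp: matrix_inv_mv_cramer dist_commute\<close>)
qed

section \<open>Completing two vectors to a frame with prescribed Gram matrix\<close>

lemma symmetric_matrix_entry: "transpose g = g \<Longrightarrow> g $ i $ j = g $ j $ i"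
  by (metis transpose_def vec_lambda_beta)

lemma quadratic_form_3_symmetric:
  fixes g :: "real^3^3"
  assumes "transpose g = g"
  shows "v \<bullet> (g *v v) = g$1$1 * v$1 * v$1 + g$2$2 * v$2 * v$2 + g$3$3 * v$3 * v$3
    + 2 * g$1$2 * v$1 * v$2 + 2 * g$1$3 * v$1 * v$3 + 2 * g$2$3 * v$2 * v$3"
  using symmetric_matrix_entry[OF assms, of 2 1] symmetric_matrix_entry[OF assms, of 3 1]
    symmetric_matrix_entry[OF assms, of 3 2]
  by (simp add: inner_vec_def matrix_vector_mult_def sum_3 algebra_simps)

lemma blk2_nth: "blk2 g $ a $ b = g $ idx a $ idx b"
  by (simp add: blk2_def)

lemma idx_simps [simp]: "idx 1 = 1" "idx 2 = 2"
  by (simp_all add: idx_def)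

lemma det_blk2: "det (blk2 g) = g$1$1 * g$2$2 - g$1$2 * g$2$1"
  by (simp add: det_2 blk2_nth)

lemma pos_def_3_det_blk2_pos:
  fixes g :: "real^3^3"
  assumes sym: "transpose g = g" and pd: "\<forall>v. v \<noteq> 0 \<longrightarrow> v \<bullet> (g *v v) > 0"
  shows "det (blk2 g) > 0"
proof -
  have "axis 1 1 \<bullet> (g *v axis 1 1) > 0" using pd by (simp add: axis_eq_0_iff)
  then have g11: "g$1$1 > 0" unfolding quadratic_form_3_symmetric[OF sym] by (simp add: axis_def)
  let ?v = "vector [g$1$2, - g$1$1, 0] :: real^3"
  have "?v \<noteq> 0" using g11 by (auto simp: vec_eq_iff forall_3)
  then have "0 < ?v \<bullet> (g *v ?v)" using pd by blast
  also have "\<dots> = g$1$1 * det (blk2 g)"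
    unfolding quadratic_form_3_symmetric[OF sym] det_blk2 symmetric_matrix_entry[OF sym, of 2 1]
    by (simp add: algebra_simps)
  finally show ?thesis using g11 by (simp add: zero_less_mult_iff)
qed

lemma schur_complement_3:
  fixes g :: "real^3^3"
  assumes sym: "transpose g = g"
    and u: "g$1$1 * u1 + g$1$2 * u2 = g$1$3" "g$1$2 * u1 + g$2$2 * u2 = g$2$3"
  shows "det g = det (blk2 g) * (g$3$3 - (u1 * g$1$3 + u2 * g$2$3))"
  using symmetric_matrix_entry[OF sym, of 2 1] symmetric_matrix_entry[OF sym, of 3 1]
    symmetric_matrix_entry[OF sym, of 3 2]
  unfolding det_3 det_blk2 by (simp add: u[symmetric] algebra_simps)

lemma pos_def_3_schur_complement_pos:
  fixes g :: "real^3^3"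
  assumes sym: "transpose g = g" and pd: "\<forall>v. v \<noteq> 0 \<longrightarrow> v \<bullet> (g *v v) > 0"
    and u: "g$1$1 * u1 + g$1$2 * u2 = g$1$3" "g$1$2 * u1 + g$2$2 * u2 = g$2$3"
  shows "g$3$3 - (u1 * g$1$3 + u2 * g$2$3) > 0"
proof -
  let ?v = "vector [- u1, - u2, 1] :: real^3"
  have "?v \<noteq> 0" by (auto simp: vec_eq_iff forall_3)
  then have "0 < ?v \<bullet> (g *v ?v)" using pd by blast
  also have "\<dots> = g$3$3 - (u1 * g$1$3 + u2 * g$2$3)"
    unfolding quadratic_form_3_symmetric[OF sym] by (simp add: u[symmetric] algebra_simps)
  finally show ?thesis .
qed

definition frame3 :: "real^3 \<Rightarrow> real^3 \<Rightarrow> real^3 \<Rightarrow> real^3^3" where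
  "frame3 a1 a2 a3 = (\<chi> r c. if c = 1 then a1 $ r else if c = 2 then a2 $ r else a3 $ r)"

lemma column_frame3:
  "column 1 (frame3 a1 a2 a3) = a1" "column 2 (frame3 a1 a2 a3) = a2" "column 3 (frame3 a1 a2 a3) = a3"
  by (simp_all add: frame3_def column_def vec_eq_iff)

lemma transpose_mult_nth: "(transpose A ** B) $ i $ j = column i A \<bullet> column j B"
  for A :: "real^'m::finite^'k::finite" and B :: "real^'n::finite^'k"
  by (simp add: matrix_matrix_mult_def transpose_def column_def inner_vec_def mult.commute)

lemma transpose_mv_nth: "(transpose A *v x) $ i = column i A \<bullet> x"
  for A :: "real^'n::finite^'k::finite"
  by (simp add: matrix_vector_mult_def transpose_def column_def inner_vec_def mult.commute)

lemma quadratic_form_gram: "u \<bullet> ((transpose Q ** Q) *v w) = (Q *v u) \<bullet> (Q *v w)"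
  for Q :: "real^'n::finite^'k::finite"
proof -
  have "u \<bullet> (transpose Q *v y) = (Q *v u) \<bullet> y" for y
    using dot_lmul_matrix[of u "transpose Q" y] by simp
  then show ?thesis by (simp add: matrix_vector_mul_assoc[symmetric])
qed

lemma det_nonzero_if_gram_pos_def:
  fixes Q :: "real^'n::finite^'n"
  assumes "transpose Q ** Q = g" and "\<forall>v. v \<noteq> 0 \<longrightarrow> v \<bullet> (g *v v) > 0"
  shows "det Q \<noteq> 0"
proof -
  have "v = 0" if "Q *v v = 0" for v
    using assms quadratic_form_gram[of v Q v] that by force
  then show ?thesis
    by (metis invertible_det_nz invertible_left_inverse matrix_left_invertible_ker)
qed

lemma gram_frame3_eqI:
  assumes "transpose g = g"
    and "a1 \<bullet> a1 = g$1$1" "a1 \<bullet> a2 = g$1$2" "a2 \<bullet> a2 = g$2$2"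
    and "a1 \<bullet> a3 = g$1$3" "a2 \<bullet> a3 = g$2$3" "a3 \<bullet> a3 = g$3$3"
  shows "transpose (frame3 a1 a2 a3) ** frame3 a1 a2 a3 = g"
proof -
  have "column i (frame3 a1 a2 a3) \<bullet> column j (frame3 a1 a2 a3) = g $ i $ j" for i j
    using exhaust_3[of i] exhaust_3[of j] assms(2-)
      symmetric_matrix_entry[OF assms(1), of 2 1] symmetric_matrix_entry[OF assms(1), of 3 1]
      symmetric_matrix_entry[OF assms(1), of 3 2] inner_commute[of a2 a1] inner_commute[of a3 a1]
      inner_commute[of a3 a2]
    by (auto simp: column_frame3)
  then show ?thesis
    by (simp add: vec_eq_iff transpose_mult_nth)
qed

lemma mv_2_columns: "Y *v u = u$1 *\<^sub>R column 1 Y + u$2 *\<^sub>R column 2 Y" for Y :: "real^2^'n::finite"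
  by (simp add: matrix_vector_mult_def column_def sum_2 vec_eq_iff mult.commute)

lemma norm_cross3_squared: "(norm (cross3 a b))\<^sup>2 = (a \<bullet> a) * (b \<bullet> b) - (a \<bullet> b)\<^sup>2"
  using norm_cross_dot[of a b] by (simp add: power_mult_distrib power2_norm_eq_inner)

lemma inner_tangential_plus_normal:
  fixes Y1 Y2 n :: "'a::real_inner" and u1 u2 s :: real
  assumes "Y1 \<bullet> n = 0" "Y2 \<bullet> n = 0" "n \<bullet> n = 1"
  defines "b \<equiv> u1 *\<^sub>R Y1 + u2 *\<^sub>R Y2 + s *\<^sub>R n"
  shows "Y1 \<bullet> b = u1 * (Y1 \<bullet> Y1) + u2 * (Y1 \<bullet> Y2)"
    and "Y2 \<bullet> b = u1 * (Y1 \<bullet> Y2) + u2 * (Y2 \<bullet> Y2)"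
    and "b \<bullet> b = u1 * (Y1 \<bullet> b) + u2 * (Y2 \<bullet> b) + s * s"
proof -
  have "n \<bullet> Y1 = 0" "n \<bullet> Y2 = 0"
    using assms(1,2) inner_commute by metis+
  then have "n \<bullet> b = s"
    using assms(3) by (simp add: b_def inner_add_right)
  have "b \<bullet> b = (u1 *\<^sub>R Y1 + u2 *\<^sub>R Y2 + s *\<^sub>R n) \<bullet> b"
    by (subst (1) b_def) (rule refl)
  also have "\<dots> = u1 * (Y1 \<bullet> b) + u2 * (Y2 \<bullet> b) + s * (n \<bullet> b)"
    by (simp only: inner_add_left inner_scaleR_left)
  finally show "b \<bullet> b = u1 * (Y1 \<bullet> b) + u2 * (Y2 \<bullet> b) + s * s"
    using \<open>n \<bullet> b = s\<close> by simp
qed (use assms(1,2) in \<open>simp_all add: b_def inner_add_right inner_commute[of Y2 Y1]\<close>)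

text \<open>This is the construction of \<open>b0\<close>: the tangential part of \<open>b\<close> is fixed by its inner products
  with the columns of \<open>Y\<close>, and its normal part is scaled to give \<open>b \<bullet> b = g\<^sub>3\<^sub>3\<close> (the Schur complement).\<close>

lemma frame_completion:
  fixes g :: "real^3^3" and Y :: "real^2^3"
  assumes sym: "transpose g = g" and pd: "\<forall>v. v \<noteq> 0 \<longrightarrow> v \<bullet> (g *v v) > 0"
    and gram: "transpose Y ** Y = blk2 g"
  defines "N \<equiv> cross3 (column 1 Y) (column 2 Y)"
  defines "b \<equiv> Y *v (matrix_inv (blk2 g) *v vector [g$1$3, g$2$3])
      + sqrt (det g / det (blk2 g)) *\<^sub>R (N /\<^sub>R norm N)"
  shows "transpose (frame3 (column 1 Y) (column 2 Y) b) ** frame3 (column 1 Y) (column 2 Y) b = g"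
    and "N \<noteq> 0"
proof -
  define Y1 Y2 where "Y1 = column 1 Y" and "Y2 = column 2 Y"
  have Y: "Y1 \<bullet> Y1 = g$1$1" "Y1 \<bullet> Y2 = g$1$2" "Y2 \<bullet> Y2 = g$2$2"
    using gram by (simp_all add: Y1_def Y2_def vec_eq_iff transpose_mult_nth blk2_nth)
  have d: "det (blk2 g) > 0" "det (blk2 g) = g$1$1 * g$2$2 - g$1$2 * g$1$2"
    using pos_def_3_det_blk2_pos[OF sym pd] det_blk2[of g] symmetric_matrix_entry[OF sym, of 2 1]
    by simp_all
  define u where "u = matrix_inv (blk2 g) *v vector [g$1$3, g$2$3]"
  have "blk2 g *v u = vector [g$1$3, g$2$3]"
    unfolding u_def using d(1) by (intro matrix_inv_mv) simp
  then have u: "g$1$1 * u$1 + g$1$2 * u$2 = g$1$3" "g$1$2 * u$1 + g$2$2 * u$2 = g$2$3"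
    using symmetric_matrix_entry[OF sym, of 2 1]
    by (auto simp: vec_eq_iff forall_2 matrix_vector_mult_def sum_2 blk2_nth)
  have "N = cross3 Y1 Y2"
    by (simp add: N_def Y1_def Y2_def)
  then have "(norm N)\<^sup>2 = det (blk2 g)"
    using norm_cross3_squared[of Y1 Y2] unfolding Y d(2) by (simp add: power2_eq_square)
  then show N: "N \<noteq> 0" using d(1) by auto
  define n where "n = N /\<^sub>R norm N"
  have "norm n = 1"
    using N by (simp add: n_def)
  then have n: "Y1 \<bullet> n = 0" "Y2 \<bullet> n = 0" "n \<bullet> n = 1"
    using \<open>N = cross3 Y1 Y2\<close> by (simp_all add: n_def dot_cross_self flip: power2_norm_eq_inner)
  define s where "s = sqrt (det g / det (blk2 g))"
  have s: "s * s = g$3$3 - (u$1 * g$1$3 + u$2 * g$2$3)"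
    using schur_complement_3[OF sym u] pos_def_3_schur_complement_pos[OF sym pd u] d(1)
    by (simp add: s_def)
  have "b = u$1 *\<^sub>R Y1 + u$2 *\<^sub>R Y2 + s *\<^sub>R n"
    by (simp add: b_def mv_2_columns u_def s_def n_def Y1_def Y2_def)
  note b_inner = inner_tangential_plus_normal[OF n, of "u$1" "u$2" s, folded this, unfolded Y]
  have Y1b: "Y1 \<bullet> b = g$1$3"
    using b_inner(1) u(1) by (simp add: mult.commute)
  have Y2b: "Y2 \<bullet> b = g$2$3"
    using b_inner(2) u(2) by (simp add: mult.commute)
  have bb: "b \<bullet> b = g$3$3"
    using b_inner(3) Y1b Y2b s by simp
  show "transpose (frame3 (column 1 Y) (column 2 Y) b) ** frame3 (column 1 Y) (column 2 Y) b = g"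
    using gram_frame3_eqI[OF sym Y Y1b Y2b bb] unfolding Y1_def Y2_def .
qed

section \<open>Christoffel symbols and curvature in terms of a frame\<close>

text \<open>At a point \<open>E\<close> where \<open>G = Q\<^sup>T Q\<close>, think of \<open>Q\<close> as the gradient of a map \<open>u\<close> and of \<open>V k l\<close> as
  \<open>\<partial>\<^sub>k\<partial>\<^sub>l u\<close>. Then \<open>\<partial>\<^sub>k G\<close> is given by the product rule, the Christoffel symbols are the coordinates of
  \<open>\<partial>\<^sub>k\<partial>\<^sub>l u\<close> in the frame \<open>Q\<close>, and the quadratic part of the curvature is a Gauss-type expression.\<close>

lemma double_sum_quadratic_form:
  "(\<Sum>n\<in>UNIV. \<Sum>p\<in>UNIV. g $ n $ p * (u $ n * w $ p)) = u \<bullet> (g *v w)"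
  for w :: "real^'n::finite"
  by (simp add: inner_vec_def matrix_vector_mult_def sum_distrib_left mult.assoc mult.left_commute)

lemma Christoffel_frame:
  fixes G :: "real^3 \<Rightarrow> real^3^3" and Q :: "real^3^3" and V :: "3 \<Rightarrow> 3 \<Rightarrow> real^3"
  assumes GQ: "G E = transpose Q ** Q" and Q: "det Q \<noteq> 0"
    and V_sym: "\<And>k l. V k l = V l k"
    and DG: "\<And>k m l. partial k G E $ m $ l = V k m \<bullet> column l Q + column m Q \<bullet> V k l"
  shows "Christoffel G i k l E = (matrix_inv Q *v V k l) $ i"
proof -
  have lowered: "(1/2) * (partial l G E $ m $ k + partial k G E $ m $ l - partial m G E $ k $ l)
      = column m Q \<bullet> V k l" for m
    unfolding DG using V_sym[of l m] V_sym[of l k] V_sym[of k m]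
    by (simp add: inner_commute algebra_simps)
  have "det (transpose Q ** Q) \<noteq> 0" using Q by (simp add: det_mul det_transpose)
  moreover have "(transpose Q ** Q) *v (matrix_inv Q *v V k l) = transpose Q *v V k l"
    by (simp add: matrix_vector_mul_assoc[symmetric] matrix_inv_mv[OF Q])
  ultimately have inv: "matrix_inv (G E) *v (transpose Q *v V k l) = matrix_inv Q *v V k l"
    unfolding GQ by (rule matrix_inv_mv_eqI)
  have "Christoffel G i k l E = (\<Sum>m\<in>UNIV. matrix_inv (G E) $ i $ m *
      ((1/2) * (partial l G E $ m $ k + partial k G E $ m $ l - partial m G E $ k $ l)))"
    unfolding Christoffel_def by (simp add: sum_distrib_left algebra_simps)
  also have "\<dots> = (matrix_inv (G E) *v (transpose Q *v V k l)) $ i"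
    unfolding lowered transpose_mv_nth[symmetric] by (simp add: matrix_vector_mult_def)
  finally show ?thesis unfolding inv .
qed

lemma Christoffel_quadratic_frame:
  fixes G :: "real^3 \<Rightarrow> real^3^3" and Q :: "real^3^3" and V :: "3 \<Rightarrow> 3 \<Rightarrow> real^3"
  assumes GQ: "G E = transpose Q ** Q" and Q: "det Q \<noteq> 0"
    and V_sym: "\<And>k l. V k l = V l k"
    and DG: "\<And>k m l. partial k G E $ m $ l = V k m \<bullet> column l Q + column m Q \<bullet> V k l"
  shows "(\<Sum>n\<in>UNIV. \<Sum>p\<in>UNIV. G E $ n $ p *
      (Christoffel G n k l E * Christoffel G p i m E - Christoffel G n k m E * Christoffel G p i l E))
    = V k l \<bullet> V i m - V k m \<bullet> V i l"
proof -
  have gram: "(\<Sum>n\<in>UNIV. \<Sum>p\<in>UNIV. G E $ n $ p * ((matrix_inv Q *v a) $ n * (matrix_inv Q *v b) $ p))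
      = a \<bullet> b" for a b
    unfolding double_sum_quadratic_form GQ quadratic_form_gram by (simp add: matrix_inv_mv[OF Q])
  show ?thesis
    unfolding Christoffel_frame[OF GQ Q V_sym DG] gram[symmetric]
    by (simp add: right_diff_distrib sum_subtractf)
qed

section \<open>The ansatz on the plate\<close>

lemma proj_emb [simp]: "proj (emb z) = z"
  by (simp add: proj_def emb_def vec_eq_iff forall_2)

lemma emb_nth_3 [simp]: "emb z $ 3 = 0"
  by (simp add: emb_def)

lemma emb_in_cyl: "z \<in> \<omega> \<Longrightarrow> emb z \<in> cyl \<omega>"
  by (simp add: cyl_def)

lemma proj_in: "x \<in> cyl \<omega> \<Longrightarrow> proj x \<in> \<omega>"
  by (simp add: cyl_def)

lemma open_cyl: "open \<omega> \<Longrightarrow> open (cyl \<omega>)"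
proof -
  assume "open \<omega>"
  moreover have "bounded_linear proj"
    unfolding linear_conv_bounded_linear[symmetric]
    by (rule linearI) (simp_all add: proj_def vec_eq_iff forall_2)
  ultimately have "open (proj -` \<omega>)"
    by (simp add: continuous_open_vimage linear_continuous_at)
  moreover have "open {x::real^3. -1/2 < x$3}" "open {x::real^3. x$3 < 1/2}"
    by (intro open_Collect_less continuous_intros)+
  moreover have "cyl \<omega> = proj -` \<omega> \<inter> {x. -1/2 < x$3} \<inter> {x. x$3 < 1/2}"
    by (auto simp: cyl_def)
  ultimately show ?thesis by auto
qed

lemma idx_neq_3 [simp]: "idx a \<noteq> 3"
  using exhaust_2[of a] by (auto simp: idx_def)

lemma axis_idx_nth_3 [simp]: "axis (idx a) x $ 3 = 0"
  by (simp add: axis_def)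

lemma emb_along_axis: "emb (z + t *\<^sub>R axis c 1) = emb z + t *\<^sub>R axis (idx c) 1"
  using exhaust_2[of c] by (auto simp: emb_def idx_def vec_eq_iff forall_3 axis_def)

lemma proj_along_axis: "proj (x + t *\<^sub>R axis (idx c) 1) = proj x + t *\<^sub>R axis c 1"
  using exhaust_2[of c] by (auto simp: proj_def idx_def vec_eq_iff forall_2 axis_def)

lemma has_partial_emb: "has_partial f (emb z) (idx c) v \<Longrightarrow> has_partial (\<lambda>y. f (emb y)) z c v"
  unfolding has_partial_def emb_along_axis .

lemma column_grad2: "column c (grad2 f x) = partial c f x"
  by (simp add: grad2_def column_def vec_eq_iff)

lemma msym_nth: "msym M $ a $ b = (M $ a $ b + M $ b $ a) / 2"
  by (simp add: msym_def transpose_def)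

lemma Q0_eq_frame3: "Q0 G y0 z = frame3 (partial 1 y0 z) (partial 2 y0 z) (b0 G y0 z)"
  by (simp add: Q0_def frame3_def)

definition unidx :: "3 \<Rightarrow> 2" where
  "unidx m = (if m = 2 then 2 else 1)"

lemma unidx_simps [simp]: "unidx (idx a) = a" "unidx 1 = 1" "unidx 2 = 2"
  using exhaust_2[of a] by (auto simp: unidx_def idx_def)

text \<open>The second derivatives at \<open>x\<^sub>3 = 0\<close> of \<open>u(x', x\<^sub>3) = y0 x' + x\<^sub>3 b0 x' + (x\<^sub>3\<^sup>2/2) dtil0 x'\<close>,
  whose gradient at \<open>x\<^sub>3 = 0\<close> is \<open>Q0\<close>.\<close>

definition ansatz_hessian :: "(real^3 \<Rightarrow> real^3^3) \<Rightarrow> (real^2 \<Rightarrow> real^3) \<Rightarrow> real^2 \<Rightarrow> 3 \<Rightarrow> 3 \<Rightarrow> real^3" where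
  "ansatz_hessian G y0 z k m =
     (if k = 3 \<and> m = 3 then dtil0 G y0 z
      else if k = 3 then partial (unidx m) (b0 G y0) z
      else if m = 3 then partial (unidx k) (b0 G y0) z
      else partial (unidx k) (partial (unidx m) y0) z)"

lemma ansatz_hessian_simps [simp]:
  "ansatz_hessian G y0 z (idx a) (idx b) = partial a (partial b y0) z"
  "ansatz_hessian G y0 z (idx a) 3 = partial a (b0 G y0) z"
  "ansatz_hessian G y0 z 3 (idx a) = partial a (b0 G y0) z"
  "ansatz_hessian G y0 z 3 3 = dtil0 G y0 z"
  by (simp_all add: ansatz_hessian_def)

text \<open>Differentiating \<open>Q0\<^sup>T Q0 = G\<close> gives \<open>Q0\<^sup>T \<partial>\<^sub>c b0 = b0_partial_rhs\<close>. Solving this system shows that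
  \<open>\<partial>\<^sub>c b0\<close> is differentiable again, without differentiating the formula for \<open>b0\<close> twice.\<close>

definition b0_partial_rhs :: "(real^3 \<Rightarrow> real^3^3) \<Rightarrow> (real^2 \<Rightarrow> real^3) \<Rightarrow> 2 \<Rightarrow> real^2 \<Rightarrow> real^3" where
  "b0_partial_rhs G y0 c z =
     (\<chi> m. if m = 3 then partial (idx c) G (emb z) $ 3 $ 3 / 2
           else partial (idx c) G (emb z) $ m $ 3 - ansatz_hessian G y0 z (idx c) m \<bullet> b0 G y0 z)"

definition dtil0_rhs :: "(real^3 \<Rightarrow> real^3^3) \<Rightarrow> (real^2 \<Rightarrow> real^3) \<Rightarrow> real^2 \<Rightarrow> real^3" where
  "dtil0_rhs G y0 z =
     vector [partial 3 G (emb z) $ 1 $ 3 - partial 1 (b0 G y0) z \<bullet> b0 G y0 z,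
             partial 3 G (emb z) $ 2 $ 3 - partial 2 (b0 G y0) z \<bullet> b0 G y0 z,
             partial 3 G (emb z) $ 3 $ 3 / 2]"

lemma mv_axis_nth: "(M *v axis j 1) $ i = M $ i $ j"
  by (simp add: matrix_vector_mult_def axis_def if_distrib cong: if_cong)

lemma axis_nth_neq: "i \<noteq> j \<Longrightarrow> axis j x $ i = 0"
  by (simp add: axis_def)

lemma dtil0_eq: "dtil0 G y0 z = matrix_inv (transpose (Q0 G y0 z)) *v dtil0_rhs G y0 z"
proof -
  let ?w = "transpose (grad2 (b0 G y0) z) *v b0 G y0 z" and ?dG = "partial 3 G (emb z)"
  have "?dG *v axis 3 1 - (1/2 * ?dG $ 3 $ 3) *\<^sub>R axis 3 1 - vector [?w $ 1, ?w $ 2, 0] = dtil0_rhs G y0 z"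
    by (simp add: dtil0_rhs_def vec_eq_iff forall_3 mv_axis_nth axis_nth_neq transpose_mv_nth column_grad2
        del: transpose_matrix_vector)
  then show ?thesis
    unfolding dtil0_def Let_def by simp
qed

lemma idx_cases [case_names idx three]:
  obtains a where "m = idx a" | "m = 3"
  using exhaust_3[of m] by (metis idx_simps)

lemma IIbar_nth: "IIbar G y0 z $ a $ b =
    partial a (b0 G y0) z \<bullet> partial b (b0 G y0) z + partial a y0 z \<bullet> partial b (dtil0 G y0) z
    - partial 3 (partial 3 G) (emb z) $ idx a $ idx b / 2"
  by (simp add: IIbar_def transpose_mult_nth column_grad2 blk2_nth)

locale plate_ansatz =
  fixes \<omega> :: "(real^2) set" and G :: "real^3 \<Rightarrow> real^3^3" and y0 :: "real^2 \<Rightarrow> real^3"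
    and U :: "(real^3) set" and W :: "(real^2) set"
  assumes open_domain: "open \<omega>"
    and G_smooth: "open U" "cyl \<omega> \<subseteq> U" "smooth_on U G"
    and y0_smooth: "open W" "\<omega> \<subseteq> W" "smooth_on W y0"
    and G_sym_pos_def: "\<forall>x\<in>cyl \<omega>. sym_pos_def (G x)"
    and y0_isometric: "\<forall>x'\<in>\<omega>. transpose (grad2 y0 x') ** grad2 y0 x' = blk2 (Gbar G x')"
    and b0_compatible: "\<forall>x'\<in>\<omega>. msym (transpose (grad2 y0 x') ** grad2 (b0 G y0) x')
                                = (1/2) *\<^sub>R blk2 (partial 3 G (emb x'))"
begin

lemma G_symmetric: "x \<in> cyl \<omega> \<Longrightarrow> transpose (G x) = G x"
  using G_sym_pos_def by (simp add: sym_pos_def_def)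

lemma G_pos_def: "x \<in> cyl \<omega> \<Longrightarrow> \<forall>v. v \<noteq> 0 \<longrightarrow> v \<bullet> (G x *v v) > 0"
  using G_sym_pos_def by (simp add: sym_pos_def_def)

lemma partial_G_symmetric: "x \<in> cyl \<omega> \<Longrightarrow> transpose (partial k G x) = partial k G x"
  using has_partial_symmetric[OF open_cyl[OF open_domain] _ _ smooth_on_has_partial1[OF G_smooth(3)]]
    G_symmetric G_smooth(2) by blast

lemma partial2_G_symmetric: "x \<in> cyl \<omega> \<Longrightarrow> transpose (partial i (partial k G) x) = partial i (partial k G) x"
  using has_partial_symmetric[OF open_cyl[OF open_domain] _ _ smooth_on_has_partial2[OF G_smooth(3)]]
    partial_G_symmetric G_smooth(2) by blast

lemma has_partial_G_emb: "z \<in> \<omega> \<Longrightarrow> has_partial (\<lambda>z. G (emb z)) z c (partial (idx c) G (emb z))"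
  using G_smooth emb_in_cyl by (blast intro: has_partial_emb smooth_on_has_partial1)

lemma has_partial_partial_G_emb:
  "z \<in> \<omega> \<Longrightarrow> has_partial (\<lambda>z. partial k G (emb z)) z c (partial (idx c) (partial k G) (emb z))"
  using G_smooth emb_in_cyl by (blast intro: has_partial_emb smooth_on_has_partial2)

lemma has_partial_partial_y0: "z \<in> \<omega> \<Longrightarrow> has_partial (partial a y0) z c (partial c (partial a y0) z)"
  using y0_smooth by (blast intro: smooth_on_has_partial2)

lemma differentiable_G_line:
  "z \<in> \<omega> \<Longrightarrow> (\<lambda>t. G (emb (z + t *\<^sub>R axis c 1)) $ i $ j) differentiable at 0"
  by (intro differentiable_vec_nth has_partial_differentiable[OF has_partial_G_emb])

lemma differentiable_partial_G_line:
  "z \<in> \<omega> \<Longrightarrow> (\<lambda>t. partial k G (emb (z + t *\<^sub>R axis c 1)) $ i $ j) differentiable at 0"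
  by (intro differentiable_vec_nth has_partial_differentiable[OF has_partial_partial_G_emb])

lemma differentiable_partial_y0_line:
  "z \<in> \<omega> \<Longrightarrow> (\<lambda>t. partial a y0 (z + t *\<^sub>R axis c 1) $ i) differentiable at 0"
  by (intro differentiable_vec_nth has_partial_differentiable[OF has_partial_partial_y0])

lemma differentiable_partial2_y0_line:
  "z \<in> \<omega> \<Longrightarrow> (\<lambda>t. partial b (partial a y0) (z + t *\<^sub>R axis c 1) $ i) differentiable at 0"
  using smooth_on_has_partial[OF y0_smooth(3), of z "[b, a]" c] y0_smooth(2)
  by (intro differentiable_vec_nth has_partial_differentiable) auto

lemma
  assumes "z \<in> \<omega>"
  shows frame_gram: "transpose (Q0 G y0 z) ** Q0 G y0 z = G (emb z)"
    and cross_partials_y0_nonzero: "cross3 (partial 1 y0 z) (partial 2 y0 z) \<noteq> 0"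
proof -
  have "emb z \<in> cyl \<omega>" using assms by (rule emb_in_cyl)
  note completion = frame_completion[OF G_symmetric[OF this] G_pos_def[OF this], of "grad2 y0 z"]
  show "transpose (Q0 G y0 z) ** Q0 G y0 z = G (emb z)"
    "cross3 (partial 1 y0 z) (partial 2 y0 z) \<noteq> 0"
    using completion y0_isometric assms by (simp_all add: Q0_eq_frame3 b0_def Gbar_def column_grad2)
qed

lemma det_frame_nonzero: "z \<in> \<omega> \<Longrightarrow> det (Q0 G y0 z) \<noteq> 0"
  using det_nonzero_if_gram_pos_def[OF frame_gram G_pos_def[OF emb_in_cyl]] .

lemma det_G_pos: "z \<in> \<omega> \<Longrightarrow> det (G (emb z)) > 0"
  using det_frame_nonzero[of z] frame_gram[of z] by (metis det_mul det_transpose not_real_square_gt_zero)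

lemma det_blk2_G_pos: "z \<in> \<omega> \<Longrightarrow> det (blk2 (G (emb z))) > 0"
  using pos_def_3_det_blk2_pos[OF G_symmetric G_pos_def] emb_in_cyl by blast

lemma differentiable_b0_line:
  assumes z: "z \<in> \<omega>"
  shows "(\<lambda>t. b0 G y0 (z + t *\<^sub>R axis c 1)) differentiable at 0"
proof (rule differentiable_vec_componentwise)
  fix k
  let ?p = "\<lambda>t. z + t *\<^sub>R axis c 1" and ?g = "\<lambda>t. G (emb (z + t *\<^sub>R axis c 1))"
  have g: "(\<lambda>t. ?g t $ i $ j) differentiable at 0" for i j
    using differentiable_G_line[OF z] .
  have g2: "(\<lambda>t. blk2 (?g t) $ i $ j) differentiable at 0" for i j
    unfolding blk2_def using g by simp
  have w: "(\<lambda>t. vector [?g t $ 1 $ 3, ?g t $ 2 $ 3] $ i) differentiable at 0" for i :: 2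
    using exhaust_2[of i] g by auto
  have u: "(\<lambda>t. (matrix_inv (blk2 (?g t)) *v vector [?g t $ 1 $ 3, ?g t $ 2 $ 3]) $ i) differentiable at 0" for i
    using det_blk2_G_pos[OF z] by (intro differentiable_matrix_inv_mv_nth g2 w) simp
  have tangential: "(\<lambda>t. (grad2 y0 (?p t) *v (matrix_inv (blk2 (?g t)) *v vector [?g t $ 1 $ 3, ?g t $ 2 $ 3])) $ k)
      differentiable at 0"
    by (rule differentiable_matrix_vector_mult_nth[OF _ u])
      (simp add: grad2_def differentiable_partial_y0_line[OF z])
  have scale: "(\<lambda>t. sqrt (det (?g t) / det (blk2 (?g t)))) differentiable at 0"
    using det_G_pos[OF z] det_blk2_G_pos[OF z]
    by (intro differentiable_sqrt differentiable_divide differentiable_det g g2) simp_all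
  have N: "(\<lambda>t. cross3 (partial 1 y0 (?p t)) (partial 2 y0 (?p t)) $ i) differentiable at 0" for i
    by (intro differentiable_cross3_nth differentiable_partial_y0_line[OF z])
  have inv_norm_N: "(\<lambda>t. inverse (norm (cross3 (partial 1 y0 (?p t)) (partial 2 y0 (?p t))))) differentiable at 0"
    using cross_partials_y0_nonzero[OF z]
    by (intro differentiable_inverse differentiable_norm differentiable_vec_componentwise N) simp_all
  show "(\<lambda>t. b0 G y0 (?p t) $ k) differentiable at 0"
    unfolding b0_def Gbar_def vector_add_component vector_scaleR_component real_scaleR_def
    by (intro differentiable_add differentiable_mult tangential scale inv_norm_N N)
qed

lemma has_partial_b0: "z \<in> \<omega> \<Longrightarrow> has_partial (b0 G y0) z c (partial c (b0 G y0) z)"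
  by (rule differentiable_has_partial[OF differentiable_b0_line])

lemma has_partial_frame_column:
  "z \<in> \<omega> \<Longrightarrow> has_partial (\<lambda>p. column m (Q0 G y0 p)) z c (ansatz_hessian G y0 z (idx c) m)"
  using exhaust_3[of m] has_partial_partial_y0[of z] has_partial_b0[of z]
    ansatz_hessian_simps(1)[of G y0 z c 1] ansatz_hessian_simps(1)[of G y0 z c 2]
  by (auto simp: Q0_eq_frame3 column_frame3)

lemma partial_G_tangential:
  assumes z: "z \<in> \<omega>"
  shows "partial (idx c) G (emb z) $ m $ l =
    ansatz_hessian G y0 z (idx c) m \<bullet> column l (Q0 G y0 z) + column m (Q0 G y0 z) \<bullet> ansatz_hessian G y0 z (idx c) l"
proof -
  have "\<forall>p\<in>\<omega>. column m (Q0 G y0 p) \<bullet> column l (Q0 G y0 p) = G (emb p) $ m $ l"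
    using frame_gram by (simp add: vec_eq_iff transpose_mult_nth)
  from has_partial_unique_on_open[OF open_domain z this
      has_partial_inner[OF has_partial_frame_column[OF z] has_partial_frame_column[OF z]]
      has_partial_mat_nth[OF has_partial_G_emb[OF z]]]
  show ?thesis by simp
qed

lemma det_transpose_frame_nonzero: "z \<in> \<omega> \<Longrightarrow> det (transpose (Q0 G y0 z)) \<noteq> 0"
  by (simp add: det_transpose det_frame_nonzero)

lemma partial_b0_eq:
  assumes z: "z \<in> \<omega>"
  shows "partial c (b0 G y0) z = matrix_inv (transpose (Q0 G y0 z)) *v b0_partial_rhs G y0 c z"
proof (rule matrix_inv_mv_eqI[OF det_transpose_frame_nonzero[OF z], symmetric])
  have "column m (Q0 G y0 z) \<bullet> partial c (b0 G y0) z = b0_partial_rhs G y0 c z $ m" for m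
    using partial_G_tangential[OF z, of c m 3]
    by (cases "m = 3") (simp_all add: b0_partial_rhs_def Q0_eq_frame3 column_frame3 inner_commute)
  then show "transpose (Q0 G y0 z) *v partial c (b0 G y0) z = b0_partial_rhs G y0 c z"
    by (simp add: vec_eq_iff transpose_mv_nth del: transpose_matrix_vector)
qed

lemma differentiable_transpose_frame_line:
  "z \<in> \<omega> \<Longrightarrow> (\<lambda>t. transpose (Q0 G y0 (z + t *\<^sub>R axis d 1)) $ i $ j) differentiable at 0"
  using exhaust_3[of i] differentiable_partial_y0_line[of z]
    differentiable_vec_nth[OF differentiable_b0_line[of z d]]
  by (auto simp: transpose_def Q0_def)

lemma has_partial_partial_b0:
  assumes z: "z \<in> \<omega>"
  shows "has_partial (partial c (b0 G y0)) z d (partial d (partial c (b0 G y0)) z)"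
proof (rule differentiable_has_partial)
  let ?p = "\<lambda>t. z + t *\<^sub>R axis d 1"
  have "(\<lambda>t. b0_partial_rhs G y0 c (?p t) $ m) differentiable at 0" for m
    using exhaust_3[of m] differentiable_partial_G_line[OF z]
      differentiable_b0_line[OF z, THEN differentiable_vec_nth]
      differentiable_partial2_y0_line[OF z, of c 1] differentiable_partial2_y0_line[OF z, of c 2]
      ansatz_hessian_simps(1)[of G y0 _ c 1] ansatz_hessian_simps(1)[of G y0 _ c 2]
    by (auto simp: b0_partial_rhs_def inner_vec_def intro!: differentiable_sum differentiable_mult)
  then have solved: "(\<lambda>t. matrix_inv (transpose (Q0 G y0 (?p t))) *v b0_partial_rhs G y0 c (?p t))
      differentiable at 0"
    using det_transpose_frame_nonzero[OF z]
    by (intro differentiable_vec_componentwise differentiable_matrix_inv_mv_nth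
        differentiable_transpose_frame_line[OF z]) simp_all
  show "(\<lambda>t. partial c (b0 G y0) (?p t)) differentiable at 0"
    by (rule differentiable_on_line_cong[OF open_domain z _ solved]) (simp add: partial_b0_eq)
qed

lemma frame_columns_dtil0:
  assumes z: "z \<in> \<omega>"
  shows "partial a y0 z \<bullet> dtil0 G y0 z + partial a (b0 G y0) z \<bullet> b0 G y0 z = partial 3 G (emb z) $ idx a $ 3"
    and "b0 G y0 z \<bullet> dtil0 G y0 z = partial 3 G (emb z) $ 3 $ 3 / 2"
proof -
  have "transpose (Q0 G y0 z) *v dtil0 G y0 z = dtil0_rhs G y0 z"
    unfolding dtil0_eq by (rule matrix_inv_mv[OF det_transpose_frame_nonzero[OF z]])
  then have col: "column m (Q0 G y0 z) \<bullet> dtil0 G y0 z = dtil0_rhs G y0 z $ m" for m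
    by (metis transpose_mv_nth)
  show "partial a y0 z \<bullet> dtil0 G y0 z + partial a (b0 G y0) z \<bullet> b0 G y0 z = partial 3 G (emb z) $ idx a $ 3"
    using col[of "idx a"] exhaust_2[of a] by (auto simp: Q0_eq_frame3 column_frame3 dtil0_rhs_def)
  show "b0 G y0 z \<bullet> dtil0 G y0 z = partial 3 G (emb z) $ 3 $ 3 / 2"
    using col[of 3] by (simp add: Q0_eq_frame3 column_frame3 dtil0_rhs_def)
qed

lemma has_partial_dtil0:
  assumes z: "z \<in> \<omega>"
  shows "has_partial (dtil0 G y0) z c (partial c (dtil0 G y0) z)"
proof (rule differentiable_has_partial)
  let ?p = "\<lambda>t. z + t *\<^sub>R axis c 1"
  have "(\<lambda>t. dtil0_rhs G y0 (?p t) $ m) differentiable at 0" for m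
    using exhaust_3[of m] differentiable_partial_G_line[OF z]
      differentiable_b0_line[OF z, THEN differentiable_vec_nth]
      has_partial_differentiable[OF has_partial_partial_b0[OF z], THEN differentiable_vec_nth]
    by (auto simp: dtil0_rhs_def inner_vec_def intro!: differentiable_sum differentiable_mult)
  then show "(\<lambda>t. dtil0 G y0 (?p t)) differentiable at 0"
    unfolding dtil0_eq using det_transpose_frame_nonzero[OF z]
    by (intro differentiable_vec_componentwise differentiable_matrix_inv_mv_nth
        differentiable_transpose_frame_line[OF z]) simp_all
qed

lemma partial2_y0_commute: "z \<in> \<omega> \<Longrightarrow> partial a (partial b y0) z = partial b (partial a y0) z"
  using partial_commute[OF y0_smooth(3,1)] y0_smooth(2) by blast

lemma partial2_G_commute: "z \<in> \<omega> \<Longrightarrow> partial k (partial l G) (emb z) = partial l (partial k G) (emb z)"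
  using partial_commute[OF G_smooth(3,1)] G_smooth(2) emb_in_cyl by blast

lemma ansatz_hessian_commute: "z \<in> \<omega> \<Longrightarrow> ansatz_hessian G y0 z k m = ansatz_hessian G y0 z m k"
  using partial2_y0_commute by (simp add: ansatz_hessian_def)

lemma b0_compatible_nth:
  assumes z: "z \<in> \<omega>"
  shows "partial a y0 z \<bullet> partial b (b0 G y0) z + partial b y0 z \<bullet> partial a (b0 G y0) z
    = partial 3 G (emb z) $ idx a $ idx b"
  using arg_cong[OF b0_compatible[rule_format, OF z], of "\<lambda>M. M $ a $ b"]
  by (simp add: msym_nth transpose_mult_nth column_grad2 blk2_nth)

text \<open>The normal derivative of \<open>G\<close> obeys the same product rule as the tangential ones: this is what the
  compatibility hypothesis on \<open>b0\<close> and the definition of \<open>dtil0\<close> encode.\<close>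

lemma partial3_G_frame:
  assumes z: "z \<in> \<omega>"
  shows "partial 3 G (emb z) $ m $ l =
    ansatz_hessian G y0 z 3 m \<bullet> column l (Q0 G y0 z) + column m (Q0 G y0 z) \<bullet> ansatz_hessian G y0 z 3 l"
proof -
  note sym = symmetric_matrix_entry[OF partial_G_symmetric[OF emb_in_cyl[OF z]]]
  show ?thesis
  proof (cases m rule: idx_cases; cases l rule: idx_cases)
    fix a b assume "m = idx a" "l = idx b"
    then show ?thesis using b0_compatible_nth[OF z, of a b] exhaust_2[of a] exhaust_2[of b]
      by (auto simp: Q0_eq_frame3 column_frame3 inner_commute)
  next
    fix a assume "m = idx a" "l = 3"
    then show ?thesis using frame_columns_dtil0(1)[OF z, of a] exhaust_2[of a]
      by (auto simp: Q0_eq_frame3 column_frame3 inner_commute)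
  next
    fix b assume "m = 3" "l = idx b"
    then show ?thesis using frame_columns_dtil0(1)[OF z, of b] exhaust_2[of b] sym[of 3 "idx b"]
      by (auto simp: Q0_eq_frame3 column_frame3 inner_commute)
  next
    assume "m = 3" "l = 3"
    then show ?thesis using frame_columns_dtil0(2)[OF z]
      by (simp add: Q0_eq_frame3 column_frame3 inner_commute)
  qed
qed

lemma partial_G_frame:
  "z \<in> \<omega> \<Longrightarrow> partial k G (emb z) $ m $ l =
    ansatz_hessian G y0 z k m \<bullet> column l (Q0 G y0 z) + column m (Q0 G y0 z) \<bullet> ansatz_hessian G y0 z k l"
  by (cases k rule: idx_cases) (simp_all add: partial_G_tangential partial3_G_frame)

lemma Christoffel_quadratic_ansatz:
  "z \<in> \<omega> \<Longrightarrow> (\<Sum>n\<in>UNIV. \<Sum>p\<in>UNIV. G (emb z) $ n $ p *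
      (Christoffel G n k l (emb z) * Christoffel G p i m (emb z)
       - Christoffel G n k m (emb z) * Christoffel G p i l (emb z)))
    = ansatz_hessian G y0 z k l \<bullet> ansatz_hessian G y0 z i m
      - ansatz_hessian G y0 z k m \<bullet> ansatz_hessian G y0 z i l"
  by (rule Christoffel_quadratic_frame[OF frame_gram[symmetric] det_frame_nonzero
        ansatz_hessian_commute partial_G_frame])

lemma partial_frame_columns_dtil0:
  assumes z: "z \<in> \<omega>"
  shows "(partial c (partial a y0) z \<bullet> dtil0 G y0 z + partial a y0 z \<bullet> partial c (dtil0 G y0) z)
    + (partial c (partial a (b0 G y0)) z \<bullet> b0 G y0 z + partial a (b0 G y0) z \<bullet> partial c (b0 G y0) z)
    = partial (idx c) (partial 3 G) (emb z) $ idx a $ 3"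
  using has_partial_unique_on_open[OF open_domain z _
      has_partial_add[OF has_partial_inner[OF has_partial_partial_y0[OF z] has_partial_dtil0[OF z]]
        has_partial_inner[OF has_partial_partial_b0[OF z] has_partial_b0[OF z]]]
      has_partial_mat_nth[OF has_partial_partial_G_emb[OF z]]]
  by (simp add: frame_columns_dtil0)

lemma partial_b0_norm:
  assumes z: "z \<in> \<omega>"
  shows "(partial d (partial c (b0 G y0)) z \<bullet> b0 G y0 z + partial c (b0 G y0) z \<bullet> partial d (b0 G y0) z)
    + (partial d (b0 G y0) z \<bullet> partial c (b0 G y0) z + b0 G y0 z \<bullet> partial d (partial c (b0 G y0)) z)
    = partial (idx d) (partial (idx c) G) (emb z) $ 3 $ 3"
proof -
  have "\<forall>p\<in>\<omega>. partial c (b0 G y0) p \<bullet> b0 G y0 p + b0 G y0 p \<bullet> partial c (b0 G y0) p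
      = partial (idx c) G (emb p) $ 3 $ 3"
    using partial_G_tangential[of _ c 3 3] by (simp add: Q0_eq_frame3 column_frame3)
  from has_partial_unique_on_open[OF open_domain z this
      has_partial_add[OF has_partial_inner[OF has_partial_partial_b0[OF z] has_partial_b0[OF z]]
        has_partial_inner[OF has_partial_b0[OF z] has_partial_partial_b0[OF z]]]
      has_partial_mat_nth[OF has_partial_partial_G_emb[OF z]]]
  show ?thesis .
qed

lemma msym_IIbar_nth:
  assumes z: "z \<in> \<omega>"
  shows "msym (IIbar G y0 z) $ a $ b = Riem G (idx a) 3 (idx b) 3 (emb z)"
proof -
  have e: "emb z \<in> cyl \<omega>" using z by (rule emb_in_cyl)
  note sym2 = symmetric_matrix_entry[OF partial2_G_symmetric[OF e]]
  have quadratic: "(\<Sum>n\<in>UNIV. \<Sum>p\<in>UNIV. G (emb z) $ n $ p *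
      (Christoffel G n 3 (idx b) (emb z) * Christoffel G p (idx a) 3 (emb z)
       - Christoffel G n 3 3 (emb z) * Christoffel G p (idx a) (idx b) (emb z)))
    = partial b (b0 G y0) z \<bullet> partial a (b0 G y0) z - dtil0 G y0 z \<bullet> partial a (partial b y0) z"
    using Christoffel_quadratic_ansatz[OF z, of 3 "idx b" "idx a" 3] by simp
  have R: "Riem G (idx a) 3 (idx b) 3 (emb z) =
      (partial (idx b) (partial 3 G) (emb z) $ idx a $ 3 + partial (idx a) (partial 3 G) (emb z) $ idx b $ 3
       - partial 3 (partial 3 G) (emb z) $ idx a $ idx b - partial (idx a) (partial (idx b) G) (emb z) $ 3 $ 3) / 2
      + (partial b (b0 G y0) z \<bullet> partial a (b0 G y0) z - dtil0 G y0 z \<bullet> partial a (partial b y0) z)"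
    unfolding Riem_def quadratic partial2_G_commute[OF z, of 3 "idx b"] sym2[of "idx a" 3 "idx b"]
    by simp
  have commute:
    "partial b (b0 G y0) z \<bullet> partial a (b0 G y0) z = partial a (b0 G y0) z \<bullet> partial b (b0 G y0) z"
    "b0 G y0 z \<bullet> partial a (partial b (b0 G y0)) z = partial a (partial b (b0 G y0)) z \<bullet> b0 G y0 z"
    "b0 G y0 z \<bullet> partial b (partial a (b0 G y0)) z = partial b (partial a (b0 G y0)) z \<bullet> b0 G y0 z"
    "dtil0 G y0 z \<bullet> partial a (partial b y0) z = partial a (partial b y0) z \<bullet> dtil0 G y0 z"
    by (rule inner_commute)+
  \<comment> \<open>half the sum of the two differentiated \<open>dtil0\<close> identities minus a quarter of the two for \<open>b0 \<bullet> b0\<close>\<close>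
  show ?thesis
    unfolding msym_nth IIbar_nth R
    using partial_frame_columns_dtil0[OF z, of b a] partial_frame_columns_dtil0[OF z, of a b]
      partial_b0_norm[OF z, of a b] partial_b0_norm[OF z, of b a]
    unfolding commute sym2[of 3 3 "idx b" "idx a"] partial2_G_commute[OF z, of "idx b" "idx a"]
      partial2_y0_commute[OF z, of b a]
    by (simp add: field_simps)
qed

lemma msym_IIbar_eq:
  assumes z: "z \<in> \<omega>"
  shows "msym (IIbar G y0 z) = transpose (grad2 (b0 G y0) z) ** grad2 (b0 G y0) z
    + msym (transpose (grad2 y0 z) ** grad2 (dtil0 G y0) z)
    - (1/2) *\<^sub>R blk2 (partial 3 (partial 3 G) (emb z))"
  using symmetric_matrix_entry[OF partial2_G_symmetric[OF emb_in_cyl[OF z]], of 3 3]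
  by (simp add: vec_eq_iff msym_nth IIbar_nth transpose_mult_nth column_grad2 blk2_nth
      inner_commute field_simps)

lemma msym_IIbar_eq_Rmat: "z \<in> \<omega> \<Longrightarrow> msym (IIbar G y0 z) = Rmat G (emb z)"
proof -
  assume z: "z \<in> \<omega>"
  have "msym (IIbar G y0 z) $ 2 $ 1 = msym (IIbar G y0 z) $ 1 $ 2"
    by (simp add: msym_nth)
  then show ?thesis
    using msym_IIbar_nth[OF z, of 1 1] msym_IIbar_nth[OF z, of 2 2] msym_IIbar_nth[OF z, of 1 2]
    by (simp add: vec_eq_iff forall_2 Rmat_def)
qed

lemma grad_tan_d0:
  assumes x: "x \<in> cyl \<omega>"
  shows "grad_tan (d0 G y0) x = (x $ 3 ^ 2 / 2) *\<^sub>R grad2 (dtil0 G y0) (proj x)"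
proof -
  have "has_partial (d0 G y0) x (idx c) ((x $ 3 ^ 2 / 2) *\<^sub>R partial c (dtil0 G y0) (proj x))" for c
    using has_partial_scaleR[OF has_partial_dtil0[OF proj_in[OF x]], of "x $ 3 ^ 2 / 2" c]
    unfolding has_partial_def d0_def proj_along_axis by simp
  then have "partial (idx c) (d0 G y0) x = (x $ 3 ^ 2 / 2) *\<^sub>R partial c (dtil0 G y0) (proj x)" for c
    by (rule partial_eqI)
  then show ?thesis
    by (simp add: vec_eq_iff grad_tan_def grad2_def)
qed

lemma II_eq_IIbar: "x \<in> cyl \<omega> \<Longrightarrow> II G y0 x = (x $ 3 ^ 2 / 2) *\<^sub>R IIbar G y0 (proj x)"
  unfolding II_def IIbar_def grad_tan_d0 matrix_scalar_ac scalar_matrix_assoc[symmetric]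
  by (simp add: scaleR_add_right scaleR_diff_right)

end

theorem lemma7p2:
  fixes \<omega> :: "(real^2) set"
    and G :: "real^3 \<Rightarrow> real^3^3"
    and y0 :: "real^2 \<Rightarrow> real^3"
  assumes "open \<omega>" and "bounded \<omega>" and "connected \<omega>" and "lipschitz_boundary2 \<omega>"
    and "smooth_on_closure (cyl \<omega>) G"
    and "\<forall>x\<in>closure (cyl \<omega>). sym_pos_def (G x)"
    and "smooth_on_closure \<omega> y0"
    and "\<forall>x'\<in>\<omega>. transpose (grad2 y0 x') ** grad2 y0 x' = blk2 (Gbar G x')"
    and "\<forall>x'\<in>\<omega>. msym (transpose (grad2 y0 x') ** grad2 (b0 G y0) x')
                   = (1/2) *\<^sub>R blk2 (partial 3 G (emb x'))"
  shows "(\<forall>x\<in>cyl \<omega>. II G y0 x = (x $ 3 ^ 2 / 2) *\<^sub>R IIbar G y0 (proj x))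
     \<and> (\<forall>x'\<in>\<omega>.
          msym (IIbar G y0 x')
            = transpose (grad2 (b0 G y0) x') ** grad2 (b0 G y0) x'
              + msym (transpose (grad2 y0 x') ** grad2 (dtil0 G y0) x')
              - (1/2) *\<^sub>R blk2 (partial 3 (partial 3 G) (emb x'))
        \<and> msym (IIbar G y0 x') = Rmat G (emb x'))"
proof -
  obtain U where U: "open U" "closure (cyl \<omega>) \<subseteq> U" "smooth_on U G"
    using assms(5) unfolding smooth_on_closure_def by blast
  obtain W where W: "open W" "closure \<omega> \<subseteq> W" "smooth_on W y0"
    using assms(7) unfolding smooth_on_closure_def by blast
  interpret plate_ansatz \<omega> G y0 U W
  proof
    show "cyl \<omega> \<subseteq> U" using U(2) closure_subset by blast
    show "\<omega> \<subseteq> W" using W(2) closure_subset by blast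
    show "\<forall>x\<in>cyl \<omega>. sym_pos_def (G x)" using assms(6) closure_subset by blast
  qed (use assms(1,8,9) U W in auto)
  show ?thesis
    using II_eq_IIbar msym_IIbar_eq msym_IIbar_eq_Rmat by blast
qed

end
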